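(* Let $L$ be a finite simplicial complex, $H\subseteq L$ a hypergraph, and $k\geq 1$, with $\mathrm{Ext}=\Delta\gamma\delta\gamma$ and $\mathrm{Int}=\delta\gamma\Delta\gamma$. (a) If $H\neq\emptyset$, then $\max(L)\cap\mathrm{Ext}^k(H)$ equals the set of all simplices occurring in some broad path $\tau_1\cdots\tau_k$ of length $k$ in $L$ for which there is $\sigma\in H$ with $\sigma\subseteq\tau_1$. (b) If $H\neq L$, then $\gamma\,\mathrm{Int}^k(H)$ equals the set of all simplices occurring in some path $\tau'_1\cdots\tau'_k$ of length $k$ in $L$ for which there is $\sigma'\in\gamma H$ with $\tau'_1\cap\sigma'\neq\emptyset$.
   Context: $L$ is a finite collection of nonempty sets closed under nonempty subsets; a hypergraph in $L$ is any subset of $L$. Operators on subsets $H\subseteq L$: $\Delta H=\{\sigma\in L:\exists\tau\in H,\sigma\subseteq\tau\}$, $\delta H=\{\sigma\in L:\text{every nonempty }\tau\subseteq\sigma\text{ lies in }H\}$, $\gamma H=L\setminus H$. $\max(L)$ is the set of maximal faces of $L$. A path is a sequence $\tau_1\cdots\tau_m$ of simplices of $L$ with $\tau_i\cap\tau_{i+1}\neq\emptyset$; its length is $m$. A broad path is a path consisting of maximal faces of $L$. *)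

theory Defs
  imports Main
begin

definition simplicial_complex :: "'a set set \<Rightarrow> bool" where
  "simplicial_complex L \<longleftrightarrow> finite L \<and> (\<forall>\<sigma>\<in>L. \<sigma> \<noteq> {}) \<and>
     (\<forall>\<sigma>\<in>L. \<forall>\<tau>. \<tau> \<noteq> {} \<and> \<tau> \<subseteq> \<sigma> \<longrightarrow> \<tau> \<in> L)"

definition Delta_op :: "'a set set \<Rightarrow> 'a set set \<Rightarrow> 'a set set" where
  "Delta_op L H = {\<sigma>\<in>L. \<exists>\<tau>\<in>H. \<sigma> \<subseteq> \<tau>}"

definition delta_op :: "'a set set \<Rightarrow> 'a set set \<Rightarrow> 'a set set" where
  "delta_op L H = {\<sigma>\<in>L. \<forall>\<tau>. \<tau> \<noteq> {} \<and> \<tau> \<subseteq> \<sigma> \<longrightarrow> \<tau> \<in> H}"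

definition gamma_op :: "'a set set \<Rightarrow> 'a set set \<Rightarrow> 'a set set" where
  "gamma_op L H = L - H"

definition Ext_op :: "'a set set \<Rightarrow> 'a set set \<Rightarrow> 'a set set" where
  "Ext_op L = Delta_op L \<circ> gamma_op L \<circ> delta_op L \<circ> gamma_op L"

definition Int_op :: "'a set set \<Rightarrow> 'a set set \<Rightarrow> 'a set set" where
  "Int_op L = delta_op L \<circ> gamma_op L \<circ> Delta_op L \<circ> gamma_op L"

definition max_faces :: "'a set set \<Rightarrow> 'a set set" where
  "max_faces L = {\<sigma>\<in>L. \<forall>\<tau>\<in>L. \<sigma> \<subseteq> \<tau> \<longrightarrow> \<tau> = \<sigma>}"

definition is_path :: "'a set set \<Rightarrow> 'a set list \<Rightarrow> bool" where
  "is_path L p \<longleftrightarrow> p \<noteq> [] \<and> set p \<subseteq> L \<and>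
     (\<forall>i. Suc i < length p \<longrightarrow> p ! i \<inter> p ! Suc i \<noteq> {})"

definition is_broad_path :: "'a set set \<Rightarrow> 'a set list \<Rightarrow> bool" where
  "is_broad_path L p \<longleftrightarrow> is_path L p \<and> set p \<subseteq> max_faces L"

end

theory Submission
  imports Defs
begin

text \<open>\<open>\<gamma>\<delta>\<gamma> X\<close> is the set of simplices containing a nonempty member of \<open>X\<close>, so \<open>Ext X\<close>
consists of their faces, and a maximal face lies in \<open>Ext (Ext X)\<close> iff it meets a maximal face
lying in \<open>Ext X\<close>; dually, \<open>\<gamma> (Int X)\<close> is the set of simplices meeting a simplex outside \<open>X\<close>.
By induction, both iterates are therefore sets \<open>path_ends\<close> of last simplices of paths of length
\<open>k\<close> with a suitable first simplex. As a path may repeat its last simplex, these are all simplices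
occurring on such paths.\<close>

definition path_ends :: "'a set set \<Rightarrow> ('a set \<Rightarrow> bool) \<Rightarrow> nat \<Rightarrow> 'a set set" where
  "path_ends A S k = {last p |p. is_path A p \<and> length p = k \<and> S (hd p)}"

lemma path_endsI: "is_path A p \<Longrightarrow> length p = k \<Longrightarrow> S (hd p) \<Longrightarrow> last p \<in> path_ends A S k"
  unfolding path_ends_def by blast

lemma path_endsE:
  assumes "\<tau> \<in> path_ends A S k"
  obtains p where "is_path A p" "length p = k" "S (hd p)" "\<tau> = last p"
  using assms unfolding path_ends_def by blast

lemma is_path_snoc:
  assumes "p \<noteq> []"
  shows "is_path A (p @ [x]) \<longleftrightarrow> is_path A p \<and> x \<in> A \<and> last p \<inter> x \<noteq> {}"
proof -
  have last: "last p = p ! (length p - 1)" "Suc (length p - 1) = length p"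
    using assms by (simp_all add: last_conv_nth)
  have "(\<forall>i. Suc i < length (p @ [x]) \<longrightarrow> (p @ [x]) ! i \<inter> (p @ [x]) ! Suc i \<noteq> {}) \<longleftrightarrow>
      (\<forall>i. Suc i < length p \<longrightarrow> p ! i \<inter> p ! Suc i \<noteq> {}) \<and> last p \<inter> x \<noteq> {}"
    (is "?all \<longleftrightarrow> _")
  proof -
    have "?all \<longleftrightarrow> (\<forall>i. Suc i < length p \<longrightarrow> (p @ [x]) ! i \<inter> (p @ [x]) ! Suc i \<noteq> {}) \<and>
        (p @ [x]) ! (length p - 1) \<inter> (p @ [x]) ! length p \<noteq> {}"
      using last(2) by (auto simp: less_Suc_eq) (metis diff_Suc_1 disjoint_iff)
    also have "\<dots> \<longleftrightarrow> (\<forall>i. Suc i < length p \<longrightarrow> p ! i \<inter> p ! Suc i \<noteq> {}) \<and> last p \<inter> x \<noteq> {}"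
      using assms by (simp add: nth_append last(1))
    finally show ?thesis .
  qed
  then show ?thesis using assms unfolding is_path_def by auto
qed

lemma is_path_take:
  assumes "is_path A p" and "i < length p"
  shows "is_path A (take (Suc i) p)"
  using assms unfolding is_path_def by (auto dest: in_set_takeD)

lemma path_ends_Suc_0: "path_ends A S (Suc 0) = {\<tau>\<in>A. S \<tau>}"
proof (intro set_eqI iffI)
  fix \<tau> assume "\<tau> \<in> path_ends A S (Suc 0)"
  then obtain p where "is_path A p" "length p = Suc 0" "S (hd p)" "\<tau> = last p"
    by (rule path_endsE)
  then show "\<tau> \<in> {\<tau>\<in>A. S \<tau>}" by (auto simp: is_path_def length_Suc_conv)
next
  fix \<tau> assume "\<tau> \<in> {\<tau>\<in>A. S \<tau>}"
  then show "\<tau> \<in> path_ends A S (Suc 0)"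
    using path_endsI[of A "[\<tau>]" "Suc 0" S] by (simp add: is_path_def)
qed

lemma path_ends_Suc:
  assumes "1 \<le> k"
  shows "path_ends A S (Suc k) = {\<tau>\<in>A. \<exists>\<mu>\<in>path_ends A S k. \<mu> \<inter> \<tau> \<noteq> {}}"
proof (intro set_eqI iffI)
  fix \<tau> assume "\<tau> \<in> path_ends A S (Suc k)"
  then obtain q where q: "is_path A q" "length q = Suc k" "S (hd q)" "\<tau> = last q"
    by (rule path_endsE)
  define p where "p = butlast q"
  have p: "length p = k" using q(2) by (simp add: p_def)
  then have "p \<noteq> []" using assms by auto
  have "q \<noteq> []" using q(2) by auto
  then have "q = p @ [\<tau>]" using q(4) by (simp add: p_def)
  with q(1,3) \<open>p \<noteq> []\<close> have "is_path A p" "\<tau> \<in> A" "last p \<inter> \<tau> \<noteq> {}" "S (hd p)"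
    by (simp_all add: is_path_snoc)
  moreover from this have "last p \<in> path_ends A S k" using p by (blast intro: path_endsI)
  ultimately show "\<tau> \<in> {\<tau>\<in>A. \<exists>\<mu>\<in>path_ends A S k. \<mu> \<inter> \<tau> \<noteq> {}}" by blast
next
  fix \<tau> assume "\<tau> \<in> {\<tau>\<in>A. \<exists>\<mu>\<in>path_ends A S k. \<mu> \<inter> \<tau> \<noteq> {}}"
  then obtain \<mu> where \<tau>: "\<tau> \<in> A" "\<mu> \<in> path_ends A S k" "\<mu> \<inter> \<tau> \<noteq> {}" by blast
  from \<tau>(2) obtain p where p: "is_path A p" "length p = k" "S (hd p)" "\<mu> = last p"
    by (rule path_endsE)
  then have "p \<noteq> []" by (simp add: is_path_def)
  with p \<tau> have "is_path A (p @ [\<tau>])" by (simp add: is_path_snoc)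
  from path_endsI[OF this, of "Suc k" S] show "\<tau> \<in> path_ends A S (Suc k)"
    using p(2,3) \<open>p \<noteq> []\<close> by simp
qed

lemma path_ends_mono:
  assumes nonempty: "{} \<notin> A" and "1 \<le> j" "j \<le> k"
  shows "path_ends A S j \<subseteq> path_ends A S k"
  using assms(3)
proof (induction k rule: dec_induct)
  case (step k)
  have "path_ends A S k \<subseteq> path_ends A S (Suc k)"
  proof
    fix \<tau> assume \<tau>: "\<tau> \<in> path_ends A S k"
    then obtain p where "is_path A p" "\<tau> = last p" by (rule path_endsE)
    then have "\<tau> \<in> A" by (metis is_path_def last_in_set subsetD)
    with nonempty have "\<tau> \<inter> \<tau> \<noteq> {}" by auto
    with \<tau> \<open>\<tau> \<in> A\<close> show "\<tau> \<in> path_ends A S (Suc k)"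
      unfolding path_ends_Suc[OF order_trans[OF assms(2) step.hyps(1)]] by blast
  qed
  with step.IH show ?case by blast
qed simp

lemma path_members_eq_path_ends:
  assumes "{} \<notin> A"
  shows "{\<tau>. \<exists>p. is_path A p \<and> length p = k \<and> S (hd p) \<and> \<tau> \<in> set p} = path_ends A S k"
proof (intro set_eqI iffI)
  fix \<tau> assume "\<tau> \<in> {\<tau>. \<exists>p. is_path A p \<and> length p = k \<and> S (hd p) \<and> \<tau> \<in> set p}"
  then obtain p where p: "is_path A p" "length p = k" "S (hd p)" "\<tau> \<in> set p" by blast
  then obtain i where i: "i < k" "p ! i = \<tau>" by (auto simp: in_set_conv_nth)
  define q where "q = take (Suc i) p"
  have "is_path A q" unfolding q_def using p(1,2) i(1) by (intro is_path_take) simp_all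
  moreover have "length q = Suc i" using p(2) i(1) by (simp add: q_def)
  moreover have "hd q = hd p" by (simp add: q_def hd_take)
  moreover have "last q = \<tau>" using p(2) i by (simp add: q_def take_Suc_conv_app_nth)
  ultimately have "\<tau> \<in> path_ends A S (Suc i)" using p(3) path_endsI[of A q "Suc i" S] by simp
  then show "\<tau> \<in> path_ends A S k" using path_ends_mono[OF assms, of "Suc i" k S] i(1) by auto
next
  fix \<tau> assume "\<tau> \<in> path_ends A S k"
  then show "\<tau> \<in> {\<tau>. \<exists>p. is_path A p \<and> length p = k \<and> S (hd p) \<and> \<tau> \<in> set p}"
    by (elim path_endsE) (auto simp: is_path_def)
qed

lemma simplicial_complex_face:
  "simplicial_complex L \<Longrightarrow> \<sigma> \<in> L \<Longrightarrow> \<tau> \<noteq> {} \<Longrightarrow> \<tau> \<subseteq> \<sigma> \<Longrightarrow> \<tau> \<in> L"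
  unfolding simplicial_complex_def by blast

lemma simplicial_complex_nonempty: "simplicial_complex L \<Longrightarrow> {} \<notin> L"
  unfolding simplicial_complex_def by blast

lemma max_faces_subset: "max_faces L \<subseteq> L"
  unfolding max_faces_def by blast

lemma is_broad_path_iff: "is_broad_path L p \<longleftrightarrow> is_path (max_faces L) p"
  using max_faces_subset[of L] unfolding is_broad_path_def is_path_def by auto

lemma exists_max_face:
  assumes "simplicial_complex L" and "\<sigma> \<in> L"
  obtains \<mu> where "\<mu> \<in> max_faces L" "\<sigma> \<subseteq> \<mu>"
proof -
  have "finite L" using assms(1) unfolding simplicial_complex_def by blast
  from finite_has_maximal2[OF this assms(2)] obtain \<mu>
    where "\<mu> \<in> L" "\<sigma> \<subseteq> \<mu>" "\<forall>\<nu>\<in>L. \<mu> \<subseteq> \<nu> \<longrightarrow> \<mu> = \<nu>" by blast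
  with that show ?thesis unfolding max_faces_def by blast
qed

lemma gamma_delta_gamma_eq:
  assumes "simplicial_complex L"
  shows "gamma_op L (delta_op L (gamma_op L X)) = {\<rho>\<in>L. \<exists>\<sigma>\<in>X. \<sigma> \<noteq> {} \<and> \<sigma> \<subseteq> \<rho>}"
proof -
  have "\<rho> \<in> delta_op L (gamma_op L X) \<longleftrightarrow> \<rho> \<in> L \<and> \<not> (\<exists>\<sigma>\<in>X. \<sigma> \<noteq> {} \<and> \<sigma> \<subseteq> \<rho>)" for \<rho>
    unfolding delta_op_def gamma_op_def by (auto intro: simplicial_complex_face[OF assms, of \<rho>])
  then show ?thesis by (auto simp: gamma_op_def[of L "delta_op L _"])
qed

lemma Ext_op_eq:
  assumes "simplicial_complex L"
  shows "Ext_op L X = {\<rho>\<in>L. \<exists>\<tau>\<in>L. \<rho> \<subseteq> \<tau> \<and> (\<exists>\<sigma>\<in>X. \<sigma> \<noteq> {} \<and> \<sigma> \<subseteq> \<tau>)}"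
  unfolding Ext_op_def Delta_op_def comp_apply gamma_delta_gamma_eq[OF assms] by auto

lemma Ext_opI:
  assumes "simplicial_complex L" "\<rho> \<in> L" "\<tau> \<in> L" "\<rho> \<subseteq> \<tau>" "\<sigma> \<in> X" "\<sigma> \<noteq> {}" "\<sigma> \<subseteq> \<tau>"
  shows "\<rho> \<in> Ext_op L X"
  unfolding Ext_op_eq[OF assms(1)] using assms(2-) by blast

lemma Ext_opE:
  assumes "simplicial_complex L" "\<rho> \<in> Ext_op L X"
  obtains \<tau> \<sigma> where "\<tau> \<in> L" "\<rho> \<subseteq> \<tau>" "\<sigma> \<in> X" "\<sigma> \<noteq> {}" "\<sigma> \<subseteq> \<tau>"
  using assms(2) unfolding Ext_op_eq[OF assms(1)] by blast

lemma max_faces_Int_Delta_op: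
  assumes "A \<subseteq> L"
  shows "max_faces L \<inter> Delta_op L A = max_faces L \<inter> A"
proof (intro set_eqI iffI)
  fix \<tau> assume "\<tau> \<in> max_faces L \<inter> Delta_op L A"
  then obtain \<tau>' where "\<tau> \<in> max_faces L" "\<tau>' \<in> A" "\<tau> \<subseteq> \<tau>'"
    unfolding Delta_op_def by blast
  moreover from this have "\<tau>' = \<tau>" using assms unfolding max_faces_def by blast
  ultimately show "\<tau> \<in> max_faces L \<inter> A" by simp
next
  fix \<tau> assume "\<tau> \<in> max_faces L \<inter> A"
  then show "\<tau> \<in> max_faces L \<inter> Delta_op L A" unfolding Delta_op_def using assms by blast
qed

lemma max_faces_Int_Ext_op:
  assumes "simplicial_complex L"
  shows "max_faces L \<inter> Ext_op L X = {\<tau>\<in>max_faces L. \<exists>\<sigma>\<in>X. \<sigma> \<noteq> {} \<and> \<sigma> \<subseteq> \<tau>}"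
proof -
  have "max_faces L \<inter> Ext_op L X = max_faces L \<inter> {\<rho>\<in>L. \<exists>\<sigma>\<in>X. \<sigma> \<noteq> {} \<and> \<sigma> \<subseteq> \<rho>}"
    unfolding Ext_op_def comp_apply gamma_delta_gamma_eq[OF assms]
    by (rule max_faces_Int_Delta_op) blast
  also have "\<dots> = {\<tau>\<in>max_faces L. \<exists>\<sigma>\<in>X. \<sigma> \<noteq> {} \<and> \<sigma> \<subseteq> \<tau>}"
    using max_faces_subset by blast
  finally show ?thesis .
qed

text \<open>\<open>Ext X\<close> is closed under faces, and every simplex lies in a maximal face, which is in
\<open>Ext X\<close> along with it.\<close>

lemma Ext_op_face_iff_meets_max_face:
  assumes L: "simplicial_complex L" and "\<tau> \<in> L"
  shows "(\<exists>\<sigma>\<in>Ext_op L X. \<sigma> \<noteq> {} \<and> \<sigma> \<subseteq> \<tau>) \<longleftrightarrow> (\<exists>\<mu>\<in>max_faces L \<inter> Ext_op L X. \<mu> \<inter> \<tau> \<noteq> {})"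
proof
  assume "\<exists>\<sigma>\<in>Ext_op L X. \<sigma> \<noteq> {} \<and> \<sigma> \<subseteq> \<tau>"
  then obtain \<sigma> where \<sigma>: "\<sigma> \<in> Ext_op L X" "\<sigma> \<noteq> {}" "\<sigma> \<subseteq> \<tau>" by blast
  from L \<sigma>(1) obtain \<nu> x where \<nu>: "\<nu> \<in> L" "\<sigma> \<subseteq> \<nu>" "x \<in> X" "x \<noteq> {}" "x \<subseteq> \<nu>"
    by (rule Ext_opE)
  obtain \<mu> where \<mu>: "\<mu> \<in> max_faces L" "\<nu> \<subseteq> \<mu>" using exists_max_face[OF L \<open>\<nu> \<in> L\<close>] .
  have "\<mu> \<in> L" using \<mu>(1) max_faces_subset by blast
  have "\<mu> \<in> Ext_op L X"
    using Ext_opI[OF L \<open>\<mu> \<in> L\<close> \<open>\<mu> \<in> L\<close> order_refl \<nu>(3,4)] \<nu>(5) \<mu>(2) by blast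
  moreover have "\<mu> \<inter> \<tau> \<noteq> {}" using \<sigma> \<nu>(2) \<mu>(2) by blast
  ultimately show "\<exists>\<mu>\<in>max_faces L \<inter> Ext_op L X. \<mu> \<inter> \<tau> \<noteq> {}" using \<mu>(1) by blast
next
  assume "\<exists>\<mu>\<in>max_faces L \<inter> Ext_op L X. \<mu> \<inter> \<tau> \<noteq> {}"
  then obtain \<mu> where \<mu>: "\<mu> \<in> Ext_op L X" "\<mu> \<inter> \<tau> \<noteq> {}" by blast
  from L \<mu>(1) obtain \<nu> x where \<nu>: "\<nu> \<in> L" "\<mu> \<subseteq> \<nu>" "x \<in> X" "x \<noteq> {}" "x \<subseteq> \<nu>"
    by (rule Ext_opE)
  have "\<mu> \<inter> \<tau> \<in> L" using simplicial_complex_face[OF L \<open>\<tau> \<in> L\<close> \<mu>(2)] by simp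
  moreover have "\<mu> \<inter> \<tau> \<subseteq> \<nu>" using \<nu>(2) by blast
  ultimately have "\<mu> \<inter> \<tau> \<in> Ext_op L X" by (rule Ext_opI[OF L _ \<nu>(1) _ \<nu>(3-5)])
  with \<mu>(2) show "\<exists>\<sigma>\<in>Ext_op L X. \<sigma> \<noteq> {} \<and> \<sigma> \<subseteq> \<tau>"
    by (intro bexI[of _ "\<mu> \<inter> \<tau>"]) auto
qed

lemma max_faces_Int_Ext_op_Ext_op:
  assumes "simplicial_complex L"
  shows "max_faces L \<inter> Ext_op L (Ext_op L X) =
    {\<tau>\<in>max_faces L. \<exists>\<mu>\<in>max_faces L \<inter> Ext_op L X. \<mu> \<inter> \<tau> \<noteq> {}}"
proof -
  have "max_faces L \<inter> Ext_op L (Ext_op L X) =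
      {\<tau>\<in>max_faces L. \<exists>\<sigma>\<in>Ext_op L X. \<sigma> \<noteq> {} \<and> \<sigma> \<subseteq> \<tau>}"
    by (rule max_faces_Int_Ext_op[OF assms])
  also have "\<dots> = {\<tau>\<in>max_faces L. \<exists>\<mu>\<in>max_faces L \<inter> Ext_op L X. \<mu> \<inter> \<tau> \<noteq> {}}"
    by (rule Collect_cong conj_cong[OF refl] Ext_op_face_iff_meets_max_face[OF assms])+
      (use max_faces_subset in blast)
  finally show ?thesis .
qed

lemma gamma_Int_op_eq:
  assumes "simplicial_complex L"
  shows "gamma_op L (Int_op L X) = {\<rho>\<in>L. \<exists>\<sigma>\<in>gamma_op L X. \<rho> \<inter> \<sigma> \<noteq> {}}"
proof (intro set_eqI iffI)
  fix \<rho> assume "\<rho> \<in> gamma_op L (Int_op L X)"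
  then obtain \<tau> where "\<rho> \<in> L" "\<tau> \<noteq> {}" "\<tau> \<subseteq> \<rho>" "\<tau> \<notin> L - Delta_op L (L - X)"
    unfolding Int_op_def gamma_op_def delta_op_def by auto
  moreover from this have "\<tau> \<in> L" using simplicial_complex_face[OF assms] by blast
  ultimately show "\<rho> \<in> {\<rho>\<in>L. \<exists>\<sigma>\<in>gamma_op L X. \<rho> \<inter> \<sigma> \<noteq> {}}"
    unfolding Delta_op_def gamma_op_def by blast
next
  fix \<rho> assume "\<rho> \<in> {\<rho>\<in>L. \<exists>\<sigma>\<in>gamma_op L X. \<rho> \<inter> \<sigma> \<noteq> {}}"
  then obtain \<sigma> x where "\<rho> \<in> L" "\<sigma> \<in> L - X" "x \<in> \<rho>" "x \<in> \<sigma>"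
    unfolding gamma_op_def by blast
  \<comment> \<open>the vertex \<open>{x}\<close> is a face of \<open>\<rho>\<close> outside \<open>\<delta>\<gamma>\<Delta>\<gamma> X\<close>\<close>
  moreover from this have "{x} \<in> Delta_op L (L - X)"
    using simplicial_complex_face[OF assms] unfolding Delta_op_def by blast
  ultimately show "\<rho> \<in> gamma_op L (Int_op L X)"
    unfolding Int_op_def gamma_op_def delta_op_def by auto
qed

lemma max_faces_Int_Ext_op_power:
  assumes "simplicial_complex L" and "H \<subseteq> L" and "1 \<le> k"
  shows "max_faces L \<inter> (Ext_op L ^^ k) H = path_ends (max_faces L) (\<lambda>\<tau>. \<exists>\<sigma>\<in>H. \<sigma> \<subseteq> \<tau>) k"
  using assms(3)
proof (induction k rule: dec_induct)
  case base
  have "{} \<notin> H" using assms(1,2) simplicial_complex_nonempty by blast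
  have "max_faces L \<inter> (Ext_op L ^^ Suc 0) H = {\<tau>\<in>max_faces L. \<exists>\<sigma>\<in>H. \<sigma> \<noteq> {} \<and> \<sigma> \<subseteq> \<tau>}"
    by (simp add: max_faces_Int_Ext_op[OF assms(1)])
  also have "\<dots> = {\<tau>\<in>max_faces L. \<exists>\<sigma>\<in>H. \<sigma> \<subseteq> \<tau>}"
    using \<open>{} \<notin> H\<close> by (metis (no_types, lifting))
  finally show ?case by (simp add: path_ends_Suc_0)
next
  case (step k)
  then obtain j where k: "k = Suc j" by (cases k) auto
  have "max_faces L \<inter> (Ext_op L ^^ Suc k) H =
      {\<tau>\<in>max_faces L. \<exists>\<mu>\<in>max_faces L \<inter> (Ext_op L ^^ k) H. \<mu> \<inter> \<tau> \<noteq> {}}"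
    using max_faces_Int_Ext_op_Ext_op[OF assms(1), of "(Ext_op L ^^ j) H"] by (simp add: k)
  also have "\<dots> = path_ends (max_faces L) (\<lambda>\<tau>. \<exists>\<sigma>\<in>H. \<sigma> \<subseteq> \<tau>) (Suc k)"
    using step by (simp add: path_ends_Suc)
  finally show ?case .
qed

lemma gamma_Int_op_power:
  assumes "simplicial_complex L" and "1 \<le> k"
  shows "gamma_op L ((Int_op L ^^ k) H) =
    path_ends L (\<lambda>\<tau>. \<exists>\<sigma>'\<in>gamma_op L H. \<tau> \<inter> \<sigma>' \<noteq> {}) k"
  using assms(2)
proof (induction k rule: dec_induct)
  case base
  then show ?case by (simp add: path_ends_Suc_0 gamma_Int_op_eq[OF assms(1)])
next
  case (step k)
  then show ?case by (simp add: path_ends_Suc gamma_Int_op_eq[OF assms(1)] Int_commute)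
qed

theorem lemma3p3:
  fixes L H :: "'a set set" and k :: nat
  assumes "simplicial_complex L" and "H \<subseteq> L" and "k \<ge> 1"
  shows "(H \<noteq> {} \<longrightarrow>
           max_faces L \<inter> (Ext_op L ^^ k) H =
             {\<tau>. \<exists>p. is_broad_path L p \<and> length p = k \<and>
                  (\<exists>\<sigma>\<in>H. \<sigma> \<subseteq> hd p) \<and> \<tau> \<in> set p})
       \<and> (H \<noteq> L \<longrightarrow>
           gamma_op L ((Int_op L ^^ k) H) =
             {\<tau>. \<exists>p. is_path L p \<and> length p = k \<and>
                  (\<exists>\<sigma>'\<in>gamma_op L H. hd p \<inter> \<sigma>' \<noteq> {}) \<and> \<tau> \<in> set p})"
proof -
  have "{} \<notin> L" "{} \<notin> max_faces L"
    using simplicial_complex_nonempty[OF assms(1)] max_faces_subset by blast+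
  then show ?thesis
    unfolding is_broad_path_iff
      max_faces_Int_Ext_op_power[OF assms] gamma_Int_op_power[OF assms(1,3)]
    by (simp add: path_members_eq_path_ends[of "max_faces L" k "\<lambda>\<tau>. \<exists>\<sigma>\<in>H. \<sigma> \<subseteq> \<tau>"]
        path_members_eq_path_ends[of L k "\<lambda>\<tau>. \<exists>\<sigma>'\<in>gamma_op L H. \<tau> \<inter> \<sigma>' \<noteq> {}"])
qed

end
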